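(* Let $G=(V=V_0\uplus V_1,v_{\mathsf{init}},E,\gamma)$ be a quantitative graph game, let $\mu>0$ be the maximum of the absolute values of the costs along transitions, and let $d=\frac pq>1$ be the discount factor with $p,q$ positive integers. Under the bit-cost model, for all $(v,w)\in E$ and all $k>0$, the cost of computing $\mathsf{cost}_k(v,w)$ in the $k$-th iteration (given the values $\mathit{wt}_{k-1}$ of the previous iteration) is $O(k\cdot\log p\cdot\max\{\log\mu,\log p\})$.
   Context: A quantitative graph game $G=(V=V_0\uplus V_1, v_{\mathsf{init}},E,\gamma)$ consists of a finite directed graph $(V,E)$ in which every state has at least one outgoing edge, a partition of $V$ into $V_0$ (maximizing player) and $V_1$ (minimizing player), an initial state, and an integer cost function $\gamma:E\to\mathbb{Z}$. Value iteration defines $\mathit{wt}_1(v)=\max\{\gamma(v,w):(v,w)\in E\}$ for $v\in V_0$ ($\min$ for $v\in V_1$) and $\mathit{wt}_{k+1}(v)=\max\{\gamma(v,w)+\frac1d\mathit{wt}_k(w):(v,w)\in E\}$ for $v\in V_0$ ($\min$ for $v\in V_1$). The transition costs are $\mathsf{cost}_1(v,w)=\gamma(v,w)$ and $\mathsf{cost}_k(v,w)=\gamma(v,w)+\frac1d\mathit{wt}_{k-1}(w)$ for $k>1$. In the bit-cost model, integers are represented in binary, a rational $r/s$ by the pair of binary representations of $r$ and $s$, and adding (resp. multiplying) integers of bit-lengths $n$ and $m$ costs $O(n+m)$ (resp. $O(n\cdot m)$). *)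

theory Defs
  imports Complex_Main
begin

definition game :: "nat set \<Rightarrow> nat set \<Rightarrow> nat \<Rightarrow> (nat \<times> nat) set \<Rightarrow> (nat \<times> nat \<Rightarrow> int) \<Rightarrow> bool" where
  "game V V0 vinit E \<gamma> \<longleftrightarrow> finite V \<and> V0 \<subseteq> V \<and> vinit \<in> V \<and> E \<subseteq> V \<times> V
     \<and> (\<forall>v\<in>V. \<exists>w. (v, w) \<in> E)"

definition mu :: "(nat \<times> nat) set \<Rightarrow> (nat \<times> nat \<Rightarrow> int) \<Rightarrow> int" where
  "mu E \<gamma> = Max ((\<lambda>e. \<bar>\<gamma> e\<bar>) ` E)"

definition opt :: "nat set \<Rightarrow> nat \<Rightarrow> rat set \<Rightarrow> rat" where
  "opt V0 v S = (if v \<in> V0 then Max S else Min S)"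

text \<open>Value iteration: wt k, for k \<ge> 1 (wt 0 is an unused dummy).\<close>
fun wt :: "nat set \<Rightarrow> (nat \<times> nat) set \<Rightarrow> (nat \<times> nat \<Rightarrow> int) \<Rightarrow> rat \<Rightarrow> nat \<Rightarrow> nat \<Rightarrow> rat" where
  "wt V0 E \<gamma> d 0 v = 0"
| "wt V0 E \<gamma> d (Suc 0) v = opt V0 v {of_int (\<gamma> (v, w)) | w. (v, w) \<in> E}"
| "wt V0 E \<gamma> d (Suc (Suc k)) v =
     opt V0 v {of_int (\<gamma> (v, w)) + wt V0 E \<gamma> d (Suc k) w / d | w. (v, w) \<in> E}"

fun costk :: "nat set \<Rightarrow> (nat \<times> nat) set \<Rightarrow> (nat \<times> nat \<Rightarrow> int) \<Rightarrow> rat \<Rightarrow> nat \<Rightarrow> nat \<Rightarrow> nat \<Rightarrow> rat" where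
  "costk V0 E \<gamma> d 0 v w = 0"
| "costk V0 E \<gamma> d (Suc 0) v w = of_int (\<gamma> (v, w))"
| "costk V0 E \<gamma> d (Suc (Suc k)) v w = of_int (\<gamma> (v, w)) + wt V0 E \<gamma> d (Suc k) w / d"

fun bitlen_nat :: "nat \<Rightarrow> nat" where
  "bitlen_nat n = (if n < 2 then 1 else 1 + bitlen_nat (n div 2))"

definition bitlen :: "int \<Rightarrow> nat" where
  "bitlen n = bitlen_nat (nat \<bar>n\<bar>)"

text \<open>Cost of adding / multiplying integers: O(n+m) / O(n*m), with constant 1.\<close>
definition add_cost :: "int \<Rightarrow> int \<Rightarrow> nat" where
  "add_cost a b = bitlen a + bitlen b"

definition mul_cost :: "int \<Rightarrow> int \<Rightarrow> nat" where
  "mul_cost a b = bitlen a * bitlen b"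

text \<open>Computation of cost k (v,w) with d = p/q, given the value wt (k-1) w represented
  as the rational N / p^(k-2) (the representation produced by value iteration).
  Returns (numerator, denominator, bit cost).\<close>
definition cost_step :: "(nat \<times> nat \<Rightarrow> int) \<Rightarrow> nat \<Rightarrow> nat \<Rightarrow> nat \<Rightarrow> nat \<Rightarrow> nat \<Rightarrow> int
    \<Rightarrow> int \<times> int \<times> nat" where
  "cost_step \<gamma> p q k v w N =
    (if k \<le> 1 then (\<gamma> (v, w), 1, bitlen (\<gamma> (v, w)))
     else
       (let D = int p ^ (k - 2);
            s = int p * D;
            a = \<gamma> (v, w) * s;
            b = int q * N;
            r = a + b
        in (r, s, mul_cost (int p) D + mul_cost (\<gamma> (v, w)) s + mul_cost (int q) N + add_cost a b)))"

end

theory Submission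
  imports Defs
begin

text \<open>Each max/min of value iteration is attained by a single successor, so
  wt k v = \<gamma>(v,w) + (q/p) wt (k-1) w for some edge (v,w). By induction, wt k is an integer
  divided by p^(k-1), and |wt k| \<le> k \<mu>. Hence, in the k-th step, the denominator p^(k-1)
  has O(k log p) bits and the numerator of wt (k-1) w has O(log \<mu> + k log p) bits. Two of the
  three multiplications in cost_step multiply p or \<gamma>(v,w) by a power of p, the third
  multiplies q by that numerator; so each of them, and the final addition, costs
  O(k log p max(log \<mu>, log p)).\<close>

declare bitlen_nat.simps [simp del]

lemma bitlen_nat_ge_1: "1 \<le> bitlen_nat n"
  by (subst bitlen_nat.simps) simp

lemma less_two_power_bitlen_nat: "n < 2 ^ bitlen_nat n"
proof (induction n rule: bitlen_nat.induct)
  case (1 n)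
  show ?case
  proof (cases "n < 2")
    case False
    then have "n div 2 < 2 ^ bitlen_nat (n div 2)"
      using "1.IH" by simp
    with False show ?thesis
      by (subst bitlen_nat.simps) simp
  qed (subst bitlen_nat.simps, simp)
qed

lemma two_power_bitlen_nat_le: "0 < n \<Longrightarrow> 2 ^ (bitlen_nat n - 1) \<le> n"
proof (induction n rule: bitlen_nat.induct)
  case (1 n)
  show ?case
  proof (cases "n < 2")
    case True
    then show ?thesis
      using "1.prems" by (subst bitlen_nat.simps) simp
  next
    case False
    then have "2 ^ (bitlen_nat (n div 2) - 1) \<le> n div 2"
      using "1.IH" by simp
    then have "2 ^ bitlen_nat (n div 2) \<le> n"
      using bitlen_nat_ge_1[of "n div 2"] by (cases "bitlen_nat (n div 2)") auto
    with False show ?thesis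
      by (subst bitlen_nat.simps) simp
  qed
qed

lemma bitlen_nat_le:
  assumes "n < 2 ^ b" and "0 < b"
  shows "bitlen_nat n \<le> b"
proof (rule ccontr)
  assume "\<not> bitlen_nat n \<le> b"
  then have "b \<le> bitlen_nat n - 1" by simp
  moreover have "0 < n"
    using \<open>\<not> bitlen_nat n \<le> b\<close> assms(2) bitlen_nat.simps[of 0] by (cases "n = 0") auto
  ultimately have "2 ^ b \<le> n"
    using two_power_bitlen_nat_le[of n] power_increasing[of b "bitlen_nat n - 1" "2::nat"]
    by linarith
  with assms(1) show False by simp
qed

lemma bitlen_nat_le_log:
  assumes "0 < n"
  shows "real (bitlen_nat n) \<le> 1 + log 2 (real n)"
proof -
  have "real (bitlen_nat n - 1) \<le> log 2 (real n)"
    by (rule le_log2_of_power) (rule two_power_bitlen_nat_le[OF assms])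
  then show ?thesis
    using bitlen_nat_ge_1[of n] by simp
qed

lemma bitlen_ge_1: "1 \<le> bitlen x"
  unfolding bitlen_def by (rule bitlen_nat_ge_1)

lemma abs_less_two_power_bitlen: "\<bar>x\<bar> < 2 ^ bitlen x"
  using less_two_power_bitlen_nat[of "nat \<bar>x\<bar>"] unfolding bitlen_def
  by (metis abs_ge_zero int_eq_iff of_nat_less_iff of_nat_numeral of_nat_power)

lemma bitlen_le:
  assumes "\<bar>x\<bar> < 2 ^ b" and "0 < b"
  shows "bitlen x \<le> b"
  unfolding bitlen_def using assms by (intro bitlen_nat_le) (simp_all add: nat_less_iff)

lemma bitlen_mono: "\<bar>x\<bar> \<le> \<bar>y\<bar> \<Longrightarrow> bitlen x \<le> bitlen y"
  using abs_less_two_power_bitlen[of y] bitlen_ge_1[of y] by (intro bitlen_le) auto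

lemma bitlen_mult_le: "bitlen (x * y) \<le> bitlen x + bitlen y"
proof (rule bitlen_le)
  have "\<bar>x * y\<bar> < 2 ^ bitlen x * 2 ^ bitlen y"
    unfolding abs_mult
    by (intro mult_strict_mono abs_less_two_power_bitlen) auto
  then show "\<bar>x * y\<bar> < 2 ^ (bitlen x + bitlen y)"
    by (simp add: power_add)
qed (use bitlen_ge_1[of x] in simp)

lemma bitlen_power_le: "bitlen (x ^ Suc n) \<le> Suc n * bitlen x"
proof (induction n)
  case (Suc n)
  then show ?case
    using bitlen_mult_le[of x "x ^ Suc n"] by simp
qed simp

lemma bitlen_of_nat_le: "0 < n \<Longrightarrow> bitlen (int n) \<le> n"
  by (rule bitlen_le) (simp_all add: less_exp)

lemma game_finite_edges: "game V V0 vinit E \<gamma> \<Longrightarrow> finite E"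
  unfolding game_def by (meson finite_SigmaI finite_subset)

lemma abs_le_mu: "game V V0 vinit E \<gamma> \<Longrightarrow> e \<in> E \<Longrightarrow> \<bar>\<gamma> e\<bar> \<le> mu E \<gamma>"
  unfolding mu_def using game_finite_edges by (intro Max_ge) auto

lemma successor_in_states: "game V V0 vinit E \<gamma> \<Longrightarrow> (v, w) \<in> E \<Longrightarrow> w \<in> V"
  unfolding game_def by auto

lemma opt_successors_attained:
  assumes "game V V0 vinit E \<gamma>" and "v \<in> V"
  shows "\<exists>w. (v, w) \<in> E \<and> opt V0 v {f w | w. (v, w) \<in> E} = f w"
proof -
  let ?S = "f ` {w. (v, w) \<in> E}"
  have "{w. (v, w) \<in> E} \<subseteq> snd ` E" by force
  then have "finite ?S"
    using game_finite_edges[OF assms(1)] by (meson finite_imageI finite_subset)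
  moreover have "?S \<noteq> {}"
    using assms unfolding game_def by auto
  ultimately have "opt V0 v ?S \<in> ?S"
    unfolding opt_def by simp
  moreover have "{f w | w. (v, w) \<in> E} = ?S" by auto
  ultimately show ?thesis by auto
qed

lemma wt_eq_costk_successor:
  assumes "game V V0 vinit E \<gamma>" and "v \<in> V" and "0 < k"
  shows "\<exists>w. (v, w) \<in> E \<and> wt V0 E \<gamma> d k v = costk V0 E \<gamma> d k v w"
proof -
  obtain j where k: "k = Suc j" using assms(3) gr0_implies_Suc by blast
  have "wt V0 E \<gamma> d k v = opt V0 v {costk V0 E \<gamma> d k v w | w. (v, w) \<in> E}"
    unfolding k by (cases j) simp_all
  then show ?thesis
    using opt_successors_attained[OF assms(1,2), of "costk V0 E \<gamma> d k v"] by simp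
qed

lemma wt_times_power_in_Ints:
  assumes "game V V0 vinit E \<gamma>" and "0 < p" and "v \<in> V"
  shows "wt V0 E \<gamma> (of_nat p / of_nat q) (Suc j) v * of_nat p ^ j \<in> \<int>"
  using assms(3)
proof (induction j arbitrary: v)
  case 0
  then obtain w where "wt V0 E \<gamma> (of_nat p / of_nat q) (Suc 0) v = of_int (\<gamma> (v, w))"
    using wt_eq_costk_successor[OF assms(1), of v "Suc 0"] by auto
  then show ?case by simp
next
  case (Suc j)
  obtain w where w: "(v, w) \<in> E" and wt_v:
    "wt V0 E \<gamma> (of_nat p / of_nat q) (Suc (Suc j)) v
      = costk V0 E \<gamma> (of_nat p / of_nat q) (Suc (Suc j)) v w"
    using wt_eq_costk_successor[OF assms(1) Suc.prems] by blast
  have "wt V0 E \<gamma> (of_nat p / of_nat q) (Suc (Suc j)) v * of_nat p ^ Suc j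
      = of_int (\<gamma> (v, w)) * of_nat p ^ Suc j
        + of_nat q * (wt V0 E \<gamma> (of_nat p / of_nat q) (Suc j) w * of_nat p ^ j)"
    unfolding wt_v costk.simps using assms(2) by (simp add: field_simps)
  moreover have "wt V0 E \<gamma> (of_nat p / of_nat q) (Suc j) w * of_nat p ^ j \<in> \<int>"
    using Suc.IH successor_in_states[OF assms(1) w] .
  ultimately show ?case
    by simp
qed

lemma abs_wt_le:
  assumes "game V V0 vinit E \<gamma>" and "1 \<le> d" and "v \<in> V"
  shows "\<bar>wt V0 E \<gamma> d (Suc j) v\<bar> \<le> of_int (mu E \<gamma>) * of_nat (Suc j)"
  using assms(3)
proof (induction j arbitrary: v)
  case 0
  then obtain w where w: "(v, w) \<in> E" and "wt V0 E \<gamma> d (Suc 0) v = of_int (\<gamma> (v, w))"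
    using wt_eq_costk_successor[OF assms(1), of v "Suc 0"] by auto
  moreover have "\<bar>of_int (\<gamma> (v, w))\<bar> \<le> (of_int (mu E \<gamma>) :: rat)"
    using abs_le_mu[OF assms(1) w] by (metis of_int_abs of_int_le_iff)
  ultimately show ?case
    by simp
next
  case (Suc j)
  obtain w where w: "(v, w) \<in> E"
    and wt_v: "wt V0 E \<gamma> d (Suc (Suc j)) v = costk V0 E \<gamma> d (Suc (Suc j)) v w"
    using wt_eq_costk_successor[OF assms(1) Suc.prems] by blast
  have "\<bar>wt V0 E \<gamma> d (Suc j) w / d\<bar> \<le> \<bar>wt V0 E \<gamma> d (Suc j) w\<bar>"
    using assms(2) by (simp add: abs_divide divide_le_eq mult_le_cancel_left1)
  also have "\<dots> \<le> of_int (mu E \<gamma>) * of_nat (Suc j)"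
    using Suc.IH successor_in_states[OF assms(1) w] by blast
  finally have "\<bar>wt V0 E \<gamma> d (Suc j) w / d\<bar> \<le> of_int (mu E \<gamma>) * of_nat (Suc j)" .
  moreover have "\<bar>of_int (\<gamma> (v, w))\<bar> \<le> (of_int (mu E \<gamma>) :: rat)"
    using abs_le_mu[OF assms(1) w] by (metis of_int_abs of_int_le_iff)
  ultimately have "\<bar>of_int (\<gamma> (v, w))\<bar> + \<bar>wt V0 E \<gamma> d (Suc j) w / d\<bar>
      \<le> of_int (mu E \<gamma>) * of_nat (Suc (Suc j))"
    by (simp add: algebra_simps)
  then show ?case
    unfolding wt_v costk.simps using abs_triangle_ineq order_trans by blast
qed

lemma wt_pred_numerator:
  assumes "game V V0 vinit E \<gamma>" and "0 < q" and "q < p" and "w \<in> V"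
  obtains N :: int
  where "2 \<le> k \<longrightarrow> of_int N = wt V0 E \<gamma> (of_nat p / of_nat q) (k - 1) w * of_nat p ^ (k - 2)"
    and "2 \<le> k \<longrightarrow> \<bar>N\<bar> \<le> mu E \<gamma> * int (k - 1) * int p ^ (k - 2)"
proof (cases "2 \<le> k")
  case True
  then obtain j where k: "k = Suc (Suc j)"
    using add_2_eq_Suc le_Suc_ex by metis
  have "wt V0 E \<gamma> (of_nat p / of_nat q) (Suc j) w * of_nat p ^ j \<in> \<int>"
    using wt_times_power_in_Ints[OF assms(1) _ assms(4)] assms(3) by simp
  then obtain N :: int where N: "of_int N = wt V0 E \<gamma> (of_nat p / of_nat q) (Suc j) w * of_nat p ^ j"
    by (metis Ints_cases)
  have "(of_int \<bar>N\<bar> :: rat) \<le> of_int (mu E \<gamma>) * of_nat (Suc j) * of_nat p ^ j"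
    unfolding of_int_abs N abs_mult
    using abs_wt_le[OF assms(1) _ assms(4)] assms(2,3) by (simp add: mult_right_mono)
  also have "\<dots> = of_int (mu E \<gamma> * int (Suc j) * int p ^ j)"
    by simp
  finally have "\<bar>N\<bar> \<le> mu E \<gamma> * int (Suc j) * int p ^ j"
    by (simp only: of_int_le_iff)
  with N show thesis
    using that[of N] unfolding k by simp
qed (use that in auto)

lemma cost_step_value:
  assumes "0 < p" and "0 < k"
    and "2 \<le> k \<longrightarrow> of_int N = wt V0 E \<gamma> (of_nat p / of_nat q) (k - 1) w * of_nat p ^ (k - 2)"
  shows "of_int (fst (cost_step \<gamma> p q k v w N)) / of_int (fst (snd (cost_step \<gamma> p q k v w N)))
    = costk V0 E \<gamma> (of_nat p / of_nat q) k v w"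
proof (cases "k = 1")
  case False
  then obtain j where k: "k = Suc (Suc j)"
    using assms(2) by (metis One_nat_def gr0_implies_Suc not0_implies_Suc)
  show ?thesis
    using assms(1,3) unfolding k cost_step_def by (simp add: Let_def field_simps)
qed (simp add: cost_step_def)

lemma bitcost_polynomial_le:
  fixes J bp bm :: nat
  assumes "1 \<le> J" and "1 \<le> bp" and "1 \<le> bm"
  shows "bp * (J * bp) + bm * (J * bp) + bp * (bm + J + J * bp)
      + (bm + J * bp + (bp + (bm + J + J * bp))) \<le> 9 * J * bp * (bm + bp)"
proof -
  have "J * bp \<le> J * bp * bp" "bm \<le> J * bp * bm" "bp * bm \<le> J * bp * bm"
    "bp \<le> J * bp * bm" "J \<le> J * bp * bm"
    using assms by simp_all
  then show ?thesis
    by (simp only: algebra_simps)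
qed

lemma cost_step_bitcost_le:
  assumes "\<bar>\<gamma> (v, w)\<bar> \<le> \<mu>" and "0 < p" and "q \<le> p" and "0 < k"
    and "2 \<le> k \<longrightarrow> \<bar>N\<bar> \<le> \<mu> * int (k - 1) * int p ^ (k - 2)"
  shows "snd (snd (cost_step \<gamma> p q k v w N)) \<le> 9 * k * bitlen (int p) * (bitlen \<mu> + bitlen (int p))"
proof -
  define bp bm where "bp = bitlen (int p)" and "bm = bitlen \<mu>"
  have "1 \<le> bp" "1 \<le> bm"
    unfolding bp_def bm_def by (rule bitlen_ge_1)+
  have "0 \<le> \<mu>"
    using assms(1) by linarith
  have b_\<gamma>: "bitlen (\<gamma> (v, w)) \<le> bm"
    unfolding bm_def using assms(1) by (intro bitlen_mono) simp
  show ?thesis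
  proof (cases "k = 1")
    case True
    have "bm \<le> bp * (bm + bp)"
      using \<open>1 \<le> bp\<close> by (metis le_add1 mult_le_mono1 mult_1 order_trans)
    then show ?thesis
      using True b_\<gamma> by (simp add: cost_step_def bp_def bm_def)
  next
    case False
    then obtain j where k: "k = Suc (Suc j)"
      using assms(4) by (metis One_nat_def gr0_implies_Suc not0_implies_Suc)
    define J where "J = Suc j"
    have "1 \<le> J" unfolding J_def by simp
    have b_q: "bitlen (int q) \<le> bp"
      unfolding bp_def using assms(3) by (intro bitlen_mono) simp
    have b_s: "bitlen (int p * int p ^ j) \<le> J * bp"
      unfolding bp_def J_def using bitlen_power_le[of "int p" j] by simp
    have b_D: "bitlen (int p ^ j) \<le> J * bp"
      using bitlen_mono[of "int p ^ j" "int p * int p ^ j"] assms(2) b_s by simp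
    have "bitlen N \<le> bitlen (\<mu> * int J * int p ^ j)"
      using assms(5) \<open>0 \<le> \<mu>\<close> unfolding k J_def by (intro bitlen_mono) (simp add: abs_mult)
    also have "\<dots> \<le> bm + J + J * bp"
      using bitlen_mult_le[of "\<mu> * int J" "int p ^ j"] bitlen_mult_le[of \<mu> "int J"]
        bitlen_of_nat_le[of J] b_D unfolding bm_def J_def by simp
    finally have b_N: "bitlen N \<le> bm + J + J * bp" .
    have b_a: "bitlen (\<gamma> (v, w) * (int p * int p ^ j)) \<le> bm + J * bp"
      using bitlen_mult_le[of "\<gamma> (v, w)" "int p * int p ^ j"] b_\<gamma> b_s by simp
    have b_b: "bitlen (int q * N) \<le> bp + (bm + J + J * bp)"
      using bitlen_mult_le[of "int q" N] b_q b_N by simp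
    have "snd (snd (cost_step \<gamma> p q k v w N))
      = bp * bitlen (int p ^ j) + bitlen (\<gamma> (v, w)) * bitlen (int p * int p ^ j)
        + bitlen (int q) * bitlen N + (bitlen (\<gamma> (v, w) * (int p * int p ^ j)) + bitlen (int q * N))"
      by (simp add: cost_step_def k Let_def mul_cost_def add_cost_def bp_def)
    also have "\<dots> \<le> bp * (J * bp) + bm * (J * bp) + bp * (bm + J + J * bp)
        + (bm + J * bp + (bp + (bm + J + J * bp)))"
      by (intro add_mono mult_le_mono order_refl b_D b_\<gamma> b_s b_q b_N b_a b_b)
    also have "\<dots> \<le> 9 * J * bp * (bm + bp)"
      using \<open>1 \<le> J\<close> \<open>1 \<le> bp\<close> \<open>1 \<le> bm\<close> by (rule bitcost_polynomial_le)
    also have "\<dots> \<le> 9 * k * bp * (bm + bp)"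
      unfolding k J_def by simp
    finally show ?thesis
      unfolding bp_def bm_def .
  qed
qed

lemma bitlen_product_le_log:
  assumes "2 \<le> p" and "1 \<le> \<mu>"
  shows "real (k * bitlen (int p) * (bitlen \<mu> + bitlen (int p)))
    \<le> 8 * real k * log 2 (real p) * max (log 2 (real_of_int \<mu>)) (log 2 (real p))"
proof -
  define L M where "L = log 2 (real p)" and "M = max (log 2 (real_of_int \<mu>)) (log 2 (real p))"
  have "1 \<le> L"
    unfolding L_def using le_log2_of_power[of 1 p] assms(1) by simp
  have "L \<le> M"
    unfolding L_def M_def by simp
  have "real (bitlen (int p)) \<le> 1 + L"
    using bitlen_nat_le_log[of p] assms(1) unfolding bitlen_def L_def by simp
  then have "real (bitlen (int p)) \<le> 2 * L"
    using \<open>1 \<le> L\<close> by linarith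
  moreover have "real (bitlen \<mu>) \<le> 1 + log 2 (real_of_int \<mu>)"
    using bitlen_nat_le_log[of "nat \<mu>"] assms(2) unfolding bitlen_def by simp
  then have "real (bitlen \<mu> + bitlen (int p)) \<le> 4 * M"
    using \<open>real (bitlen (int p)) \<le> 2 * L\<close> \<open>1 \<le> L\<close> \<open>L \<le> M\<close> unfolding M_def by linarith
  ultimately have "real (bitlen (int p)) * real (bitlen \<mu> + bitlen (int p)) \<le> (2 * L) * (4 * M)"
    by (intro mult_mono) simp_all
  then have "real (k * bitlen (int p) * (bitlen \<mu> + bitlen (int p))) \<le> real k * ((2 * L) * (4 * M))"
    unfolding of_nat_mult mult.assoc by (rule mult_left_mono) simp
  also have "\<dots> = 8 * real k * L * M"
    by simp
  finally show ?thesis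
    unfolding L_def M_def .
qed

lemma cost_step_bitcost_le_log:
  assumes "\<bar>\<gamma> (v, w)\<bar> \<le> \<mu>" and "0 < \<mu>" and "0 < q" and "q < p" and "0 < k"
    and "2 \<le> k \<longrightarrow> \<bar>N\<bar> \<le> \<mu> * int (k - 1) * int p ^ (k - 2)"
  shows "real (snd (snd (cost_step \<gamma> p q k v w N)))
    \<le> 72 * real k * log 2 (real p) * max (log 2 (real_of_int \<mu>)) (log 2 (real p))"
proof -
  let ?b = "k * bitlen (int p) * (bitlen \<mu> + bitlen (int p))"
  have "snd (snd (cost_step \<gamma> p q k v w N)) \<le> 9 * k * bitlen (int p) * (bitlen \<mu> + bitlen (int p))"
    using assms by (intro cost_step_bitcost_le) simp_all
  then have "real (snd (snd (cost_step \<gamma> p q k v w N))) \<le> real (9 * ?b)"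
    by (simp only: of_nat_le_iff mult.assoc)
  also have "\<dots> = 9 * real ?b"
    by simp
  also have "\<dots> \<le> 9 * (8 * real k * log 2 (real p) * max (log 2 (real_of_int \<mu>)) (log 2 (real p)))"
    using bitlen_product_le_log[of p \<mu> k] assms(2-4) by simp
  finally show ?thesis
    by simp
qed

theorem lemma5:
  shows "\<exists>C::real. C > 0 \<and>
    (\<forall>V V0 vinit E \<gamma> (p::nat) (q::nat) v w (k::nat).
      game V V0 vinit E \<gamma> \<and> mu E \<gamma> > 0 \<and> 0 < q \<and> q < p \<and> (v, w) \<in> E \<and> 0 < k \<longrightarrow>
      (\<exists>N::int.
         (2 \<le> k \<longrightarrow> of_int N = wt V0 E \<gamma> (of_nat p / of_nat q) (k - 1) w * of_nat p ^ (k - 2)) \<and>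
         (case cost_step \<gamma> p q k v w N of (r, s, c) \<Rightarrow>
            of_int r / of_int s = costk V0 E \<gamma> (of_nat p / of_nat q) k v w \<and>
            real c \<le> C * real k * log 2 (real p) * max (log 2 (real_of_int (mu E \<gamma>))) (log 2 (real p)))))"
proof (rule exI[of _ 72], intro conjI allI impI)
  fix V V0 :: "nat set" and vinit :: nat and E :: "(nat \<times> nat) set" and \<gamma> :: "nat \<times> nat \<Rightarrow> int"
    and p q v w k :: nat
  assume "game V V0 vinit E \<gamma> \<and> mu E \<gamma> > 0 \<and> 0 < q \<and> q < p \<and> (v, w) \<in> E \<and> 0 < k"
  then have game: "game V V0 vinit E \<gamma>" and "0 < mu E \<gamma>" "0 < q" "q < p" "(v, w) \<in> E" "0 < k"
    by auto
  obtain N :: int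
    where N_wt: "2 \<le> k \<longrightarrow> of_int N = wt V0 E \<gamma> (of_nat p / of_nat q) (k - 1) w * of_nat p ^ (k - 2)"
      and N_le: "2 \<le> k \<longrightarrow> \<bar>N\<bar> \<le> mu E \<gamma> * int (k - 1) * int p ^ (k - 2)"
    using wt_pred_numerator[OF game \<open>0 < q\<close> \<open>q < p\<close> successor_in_states[OF game \<open>(v, w) \<in> E\<close>]] .
  have "of_int (fst (cost_step \<gamma> p q k v w N)) / of_int (fst (snd (cost_step \<gamma> p q k v w N)))
      = costk V0 E \<gamma> (of_nat p / of_nat q) k v w"
    using \<open>q < p\<close> \<open>0 < k\<close> N_wt by (intro cost_step_value) simp_all
  moreover have "real (snd (snd (cost_step \<gamma> p q k v w N)))
      \<le> 72 * real k * log 2 (real p) * max (log 2 (real_of_int (mu E \<gamma>))) (log 2 (real p))"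
    using \<open>0 < mu E \<gamma>\<close> \<open>0 < q\<close> \<open>q < p\<close> \<open>0 < k\<close> N_le
    by (intro cost_step_bitcost_le_log abs_le_mu[OF game \<open>(v, w) \<in> E\<close>])
  ultimately show "\<exists>N::int.
      (2 \<le> k \<longrightarrow> of_int N = wt V0 E \<gamma> (of_nat p / of_nat q) (k - 1) w * of_nat p ^ (k - 2)) \<and>
      (case cost_step \<gamma> p q k v w N of (r, s, c) \<Rightarrow>
         of_int r / of_int s = costk V0 E \<gamma> (of_nat p / of_nat q) k v w \<and>
         real c \<le> 72 * real k * log 2 (real p) * max (log 2 (real_of_int (mu E \<gamma>))) (log 2 (real p)))"
    using N_wt by (intro exI[of _ N]) (auto split: prod.split)
qed simp

end
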